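(* Let $A,B\in \mathbb{R}^{m\times n}$ with $m<n$ and let $1\le p\le\infty$. If $A$ has full row rank and $\|A^\dagger B\|_p<1$, then for any given $b\in\mathbb{R}^m$ the equation $x=A^\dagger(B|x|+b)$ in $x\in\mathbb{R}^n$ has a unique solution, and that solution also satisfies the generalized absolute value equation $Ax-B|x|=b$.
   Context: $A^\dagger$ denotes the Moore–Penrose inverse of $A$. $|x|$ denotes the entrywise absolute value. $\|\cdot\|_p$ on matrices denotes the operator norm induced by the vector $p$-norm. *)

theory Defs
  imports "HOL-Analysis.Analysis"
begin

definition is_pinv :: "real^'n^'m \<Rightarrow> real^'m^'n \<Rightarrow> bool" where
  "is_pinv A X \<longleftrightarrow> A ** X ** A = A \<and> X ** A ** X = X \<and>
     transpose (A ** X) = A ** X \<and> transpose (X ** A) = X ** A"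

definition pinv :: "real^'n^'m \<Rightarrow> real^'m^'n" where
  "pinv A = (THE X. is_pinv A X)"

definition vabs :: "real^'n \<Rightarrow> real^'n" where
  "vabs x = (\<chi> i. \<bar>x $ i\<bar>)"

definition pnorm :: "ereal \<Rightarrow> real^'n \<Rightarrow> real" where
  "pnorm p x = (if p = \<infinity> then (MAX i\<in>UNIV. \<bar>x $ i\<bar>)
     else (\<Sum>i\<in>UNIV. \<bar>x $ i\<bar> powr real_of_ereal p) powr (1 / real_of_ereal p))"

definition opnorm :: "ereal \<Rightarrow> real^'n^'m \<Rightarrow> real" where
  "opnorm p M = (SUP x\<in>{x. pnorm p x = 1}. pnorm p (M *v x))"

end

theory Submission imports Defs begin

(* Full row rank makes A A\<^sup>+ = I, so every fixed point x of x \<mapsto> A\<^sup>+(B|x| + b) solves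
   A x - B|x| = b.
   Existence and uniqueness of the fixed point is Banach's theorem: x \<mapsto> |x| is 1-Lipschitz for
   every p-norm (entrywise ||x| - |y|| \<le> |x - y|, and p-norms are monotone), so the map contracts
   with constant \<parallel>A\<^sup>+B\<parallel>\<^sub>p < 1. As the p-norm dominates every coordinate, the iterates converge
   in the Euclidean norm, and Minkowski's inequality for the p-norm is never needed. *)

lemma banach_fix_dominating_gauge:
  fixes f :: "'a::banach \<Rightarrow> 'a" and N :: "'a \<Rightarrow> real"
  assumes f_cont: "continuous_on UNIV f"
    and dominates: "\<And>x. norm x \<le> K * N x" and "0 \<le> K"
    and contraction: "\<And>x y. N (f x - f y) \<le> c * N (x - y)"
    and "0 \<le> c" "c < 1"
  shows "\<exists>!x. f x = x"
proof -
  have unique: "x = y" if "f x = x" "f y = y" for x y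
  proof -
    have "N (x - y) \<le> c * N (x - y)" using contraction[of x y] that by simp
    then have "N (x - y) \<le> 0" using \<open>c < 1\<close> by (metis mult_le_cancel_right1 not_le)
    then have "norm (x - y) \<le> 0" using dominates[of "x - y"] \<open>0 \<le> K\<close>
      by (meson mult_nonneg_nonpos order_trans)
    then show "x = y" by simp
  qed
  define s where "s k = (f ^^ k) 0" for k
  have s_Suc: "s (Suc k) = f (s k)" for k by (simp add: s_def)
  have step: "N (s (Suc k) - s k) \<le> c ^ k * N (s 1 - s 0)" for k
  proof (induction k)
    case (Suc k)
    have "N (s (Suc (Suc k)) - s (Suc k)) \<le> c * N (s (Suc k) - s k)"
      using contraction by (simp add: s_Suc)
    also have "\<dots> \<le> c * (c ^ k * N (s 1 - s 0))" using Suc \<open>0 \<le> c\<close> by (intro mult_left_mono)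
    finally show ?case by simp
  qed simp
  have "summable (\<lambda>k. s (Suc k) - s k)"
  proof (rule summable_comparison_test')
    show "summable (\<lambda>k. K * N (s 1 - s 0) * c ^ k)"
      using \<open>0 \<le> c\<close> \<open>c < 1\<close> by (intro summable_mult summable_geometric) simp
    fix k
    have "norm (s (Suc k) - s k) \<le> K * N (s (Suc k) - s k)" by (rule dominates)
    also have "\<dots> \<le> K * (c ^ k * N (s 1 - s 0))" using step \<open>0 \<le> K\<close> by (rule mult_left_mono)
    finally show "norm (s (Suc k) - s k) \<le> K * N (s 1 - s 0) * c ^ k" by (simp add: ac_simps)
  qed
  then have "(\<lambda>n. s 0 + (\<Sum>k<n. s (Suc k) - s k)) \<longlonglongrightarrow> s 0 + (\<Sum>k. s (Suc k) - s k)"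
    by (intro tendsto_add tendsto_const summable_LIMSEQ)
  then have s_lim: "s \<longlonglongrightarrow> s 0 + (\<Sum>k. s (Suc k) - s k)" (is "_ \<longlonglongrightarrow> ?L")
    by (simp add: sum_lessThan_telescope)
  have "(\<lambda>k. f (s k)) \<longlonglongrightarrow> f ?L"
    by (rule continuous_on_tendsto_compose[OF f_cont s_lim]) auto
  moreover have "(\<lambda>k. f (s k)) \<longlonglongrightarrow> ?L"
    using LIMSEQ_Suc[OF s_lim] by (simp add: s_Suc)
  ultimately have "f ?L = ?L" by (rule LIMSEQ_unique)
  then show ?thesis using unique by blast
qed

lemma ereal_ge_1_cases:
  assumes "1 \<le> p"
  obtains (infinite) "p = \<infinity>" | (finite) P where "1 \<le> P" "p = ereal P"
  using assms by (cases p) auto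

lemma pnorm_zero [simp]: "pnorm p 0 = 0"
  by (simp add: pnorm_def)

lemma abs_nth_le_pnorm:
  assumes "1 \<le> p" shows "\<bar>v $ i\<bar> \<le> pnorm p v"
  using assms
proof (cases rule: ereal_ge_1_cases)
  case infinite then show ?thesis by (simp add: pnorm_def)
next
  case (finite P)
  have "\<bar>v $ i\<bar> = (\<bar>v $ i\<bar> powr P) powr (1/P)" using finite by (simp add: powr_powr)
  also have "\<dots> \<le> (\<Sum>j\<in>UNIV. \<bar>v $ j\<bar> powr P) powr (1/P)"
    using finite by (intro powr_mono2) (auto intro: member_le_sum)
  finally show ?thesis using finite by (simp add: pnorm_def)
qed

lemma pnorm_nonneg: "1 \<le> p \<Longrightarrow> 0 \<le> pnorm p v"
  using abs_nth_le_pnorm abs_ge_zero order_trans by metis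

lemma pnorm_pos:
  assumes "1 \<le> p" "v \<noteq> 0" shows "0 < pnorm p v"
proof -
  obtain i where "v $ i \<noteq> 0" using assms(2) by (metis vec_eq_iff zero_index)
  then show ?thesis using abs_nth_le_pnorm[OF assms(1), of v i] by linarith
qed

lemma pnorm_mono:
  assumes "1 \<le> p" "\<And>i. \<bar>u $ i\<bar> \<le> \<bar>v $ i\<bar>" shows "pnorm p u \<le> pnorm p v"
  using assms(1)
proof (cases rule: ereal_ge_1_cases)
  case infinite
  have "\<bar>u $ i\<bar> \<le> (MAX j\<in>UNIV. \<bar>v $ j\<bar>)" for i
    by (rule order_trans[OF assms(2)]) (rule Max_ge; simp)
  then show ?thesis using infinite by (simp add: pnorm_def)
next
  case (finite P)
  then show ?thesis
    using assms(2) by (simp add: pnorm_def) (intro powr_mono2 sum_mono sum_nonneg; simp)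
qed

lemma pnorm_scaleR:
  assumes "1 \<le> p" shows "pnorm p (t *\<^sub>R v) = \<bar>t\<bar> * pnorm p v"
  using assms
proof (cases rule: ereal_ge_1_cases)
  case infinite
  have "\<bar>t\<bar> * (MAX i\<in>UNIV. \<bar>v $ i\<bar>) = (MAX i\<in>UNIV. \<bar>t\<bar> * \<bar>v $ i\<bar>)"
    using mono_Max_commute[of "(*) \<bar>t\<bar>" "range (\<lambda>i. \<bar>v $ i\<bar>)"]
    by (simp add: mono_def mult_left_mono image_image)
  then show ?thesis using infinite by (simp add: pnorm_def abs_mult)
next
  case (finite P)
  have "(\<Sum>j\<in>UNIV. \<bar>t * v $ j\<bar> powr P) = \<bar>t\<bar> powr P * (\<Sum>j\<in>UNIV. \<bar>v $ j\<bar> powr P)"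
    by (simp add: abs_mult powr_mult sum_distrib_left)
  then have "(\<Sum>j\<in>UNIV. \<bar>t * v $ j\<bar> powr P) powr (1/P) = \<bar>t\<bar> * (\<Sum>j\<in>UNIV. \<bar>v $ j\<bar> powr P) powr (1/P)"
    using finite by (simp add: powr_mult powr_powr sum_nonneg)
  then show ?thesis using finite by (simp add: pnorm_def)
qed

lemma pnorm_le_card_mult:
  fixes v :: "real^'n"
  assumes "1 \<le> p" "0 \<le> K" "\<And>i. \<bar>v $ i\<bar> \<le> K"
  shows "pnorm p v \<le> real CARD('n) * K"
  using assms(1)
proof (cases rule: ereal_ge_1_cases)
  case infinite
  have "pnorm p v \<le> K" using infinite assms(3) by (simp add: pnorm_def)
  also have "\<dots> \<le> real CARD('n) * K" using assms(2) by (simp add: Suc_leI mult_le_cancel_right1)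
  finally show ?thesis .
next
  case (finite P)
  have card: "1 \<le> real CARD('n)" by (simp add: Suc_leI)
  have "(\<Sum>j\<in>UNIV. \<bar>v $ j\<bar> powr P) \<le> real CARD('n) * K powr P"
    using sum_mono[of UNIV "\<lambda>j. \<bar>v $ j\<bar> powr P" "\<lambda>_. K powr P"] finite assms(3)
    by (simp add: powr_mono2)
  then have "(\<Sum>j\<in>UNIV. \<bar>v $ j\<bar> powr P) powr (1/P) \<le> (real CARD('n) * K powr P) powr (1/P)"
    using finite by (intro powr_mono2 sum_nonneg) auto
  also have "\<dots> = real CARD('n) powr (1/P) * K"
    using finite assms(2) by (simp add: powr_mult powr_powr)
  also have "\<dots> \<le> real CARD('n) powr 1 * K"
    using finite assms(2) card by (intro mult_right_mono powr_mono) auto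
  finally show ?thesis using finite by (simp add: pnorm_def)
qed

lemma norm_le_card_pnorm:
  fixes v :: "real^'n"
  assumes "1 \<le> p" shows "norm v \<le> real CARD('n) * pnorm p v"
proof -
  have "norm v \<le> (\<Sum>i\<in>UNIV. \<bar>v $ i\<bar>)" by (rule norm_le_l1_cart)
  also have "\<dots> \<le> (\<Sum>i\<in>(UNIV::'n set). pnorm p v)" by (intro sum_mono abs_nth_le_pnorm assms)
  finally show ?thesis by simp
qed

lemma bdd_above_pnorm_unit_sphere_image:
  fixes M :: "real^'n^'m"
  assumes "1 \<le> p"
  shows "bdd_above ((\<lambda>x. pnorm p (M *v x)) ` {x. pnorm p x = 1})"
proof -
  define K where "K = (\<Sum>i\<in>UNIV. \<Sum>j\<in>UNIV. \<bar>M $ i $ j\<bar>)"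
  have "0 \<le> K" unfolding K_def by (intro sum_nonneg) auto
  have "pnorm p (M *v x) \<le> real CARD('m) * K" if "pnorm p x = 1" for x
  proof (rule pnorm_le_card_mult[OF assms \<open>0 \<le> K\<close>])
    fix i
    have x_le_1: "\<bar>x $ j\<bar> \<le> 1" for j using abs_nth_le_pnorm[OF assms, of x j] that by simp
    have "\<bar>(M *v x) $ i\<bar> \<le> (\<Sum>j\<in>UNIV. \<bar>M $ i $ j * x $ j\<bar>)"
      unfolding matrix_vector_mult_def by (simp add: sum_abs)
    also have "\<dots> \<le> (\<Sum>j\<in>UNIV. \<bar>M $ i $ j\<bar>)"
      using x_le_1 by (intro sum_mono) (auto simp: abs_mult intro: mult_left_le)
    also have "\<dots> \<le> K" unfolding K_def
      by (rule member_le_sum[where f="\<lambda>i. \<Sum>j\<in>UNIV. \<bar>M $ i $ j\<bar>"]) (auto intro: sum_nonneg)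
    finally show "\<bar>(M *v x) $ i\<bar> \<le> K" .
  qed
  then show ?thesis by (intro bdd_aboveI[where M="real CARD('m) * K"]) auto
qed

lemma pnorm_matrix_vector_le:
  fixes M :: "real^'n^'m"
  assumes "1 \<le> p"
  shows "pnorm p (M *v v) \<le> opnorm p M * pnorm p v"
proof (cases "v = 0")
  case False
  define r where "r = pnorm p v"
  have "0 < r" using pnorm_pos[OF assms False] by (simp add: r_def)
  define u where "u = (1 / r) *\<^sub>R v"
  have v_eq: "v = r *\<^sub>R u" using \<open>0 < r\<close> by (simp add: u_def)
  have "pnorm p u = 1" using \<open>0 < r\<close> by (simp add: u_def pnorm_scaleR[OF assms] r_def)
  then have "pnorm p (M *v u) \<le> opnorm p M" unfolding opnorm_def
    by (intro cSUP_upper bdd_above_pnorm_unit_sphere_image[OF assms]) auto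
  then have "r * pnorm p (M *v u) \<le> opnorm p M * r"
    using \<open>0 < r\<close> by (simp add: mult.commute)
  moreover have "pnorm p (M *v v) = r * pnorm p (M *v u)"
    using \<open>0 < r\<close> by (simp add: v_eq matrix_vector_mult_scaleR pnorm_scaleR[OF assms])
  ultimately show ?thesis by (simp add: r_def)
qed (simp add: matrix_vector_mult_0_right)

lemma pnorm_vabs_diff_le: "1 \<le> p \<Longrightarrow> pnorm p (vabs x - vabs y) \<le> pnorm p (x - y)"
  by (rule pnorm_mono) (auto simp: vabs_def abs_triangle_ineq3)

lemma continuous_on_vabs: "continuous_on UNIV vabs"
  unfolding vabs_def by (intro continuous_intros)

lemma ex1_fixpoint_matrix_vabs_affine:
  fixes M :: "real^'n^'n" and c :: "real^'n"
  assumes "1 \<le> p" "opnorm p M < 1"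
  shows "\<exists>!x. x = M *v vabs x + c"
proof -
  define f where "f x = M *v vabs x + c" for x
  define q where "q = max (opnorm p M) 0"
  have "\<exists>!x. f x = x"
  proof (rule banach_fix_dominating_gauge[where N = "pnorm p" and K = "real CARD('n)" and c = q])
    show "continuous_on UNIV f" unfolding f_def
      by (intro continuous_intros linear_continuous_on continuous_on_compose2[OF _ continuous_on_vabs])
        (auto intro: matrix_vector_mul_linear)
    show "norm x \<le> real CARD('n) * pnorm p x" for x :: "real^'n" by (rule norm_le_card_pnorm[OF assms(1)])
    show "pnorm p (f x - f y) \<le> q * pnorm p (x - y)" for x y
    proof -
      have "pnorm p (f x - f y) = pnorm p (M *v (vabs x - vabs y))"
        by (simp add: f_def matrix_vector_mult_diff_distrib)
      also have "\<dots> \<le> opnorm p M * pnorm p (vabs x - vabs y)"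
        by (rule pnorm_matrix_vector_le[OF assms(1)])
      also have "\<dots> \<le> q * pnorm p (x - y)"
        unfolding q_def using pnorm_vabs_diff_le[OF assms(1)] pnorm_nonneg[OF assms(1)]
        by (intro mult_mono) auto
      finally show ?thesis .
    qed
  qed (use assms in \<open>auto simp: q_def\<close>)
  then show ?thesis unfolding f_def by (simp add: eq_commute)
qed

lemma pinv_unique:
  assumes "is_pinv A X" "is_pinv A Y" shows "X = Y"
proof -
  have X: "A ** X ** A = A" "X ** A ** X = X" "transpose (A ** X) = A ** X" "transpose (X ** A) = X ** A"
    using assms(1) unfolding is_pinv_def by auto
  have Y: "A ** Y ** A = A" "Y ** A ** Y = Y" "transpose (A ** Y) = A ** Y" "transpose (Y ** A) = Y ** A"
    using assms(2) unfolding is_pinv_def by auto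
  have "A ** X = A ** Y ** A ** X"
    using Y(1) by simp
  also have "\<dots> = transpose (A ** Y) ** transpose (A ** X)" using X Y by (simp add: matrix_mul_assoc)
  also have "\<dots> = transpose (A ** X ** A ** Y)" by (simp add: matrix_transpose_mul matrix_mul_assoc)
  also have "\<dots> = A ** Y" using X Y by simp
  finally have AX: "A ** X = A ** Y" .
  have "X ** A = X ** A ** Y ** A"
    using Y(1) by (metis matrix_mul_assoc)
  also have "\<dots> = transpose (X ** A) ** transpose (Y ** A)" using X Y by (simp add: matrix_mul_assoc)
  also have "\<dots> = transpose (Y ** A ** X ** A)" by (simp add: matrix_transpose_mul matrix_mul_assoc)
  also have "\<dots> = Y ** A" using X Y by (metis matrix_mul_assoc)
  finally have XA: "X ** A = Y ** A" .
  have "X = X ** A ** X" using X by simp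
  also have "\<dots> = Y ** A ** Y" using AX XA by (metis matrix_mul_assoc)
  also have "\<dots> = Y" using Y by simp
  finally show ?thesis .
qed

lemma pinv_eqI: "is_pinv A X \<Longrightarrow> pinv A = X"
  unfolding pinv_def using pinv_unique by blast

lemma invertible_gram_full_row_rank:
  fixes A :: "real^'n^'m"
  assumes "rank A = CARD('m)"
  shows "invertible (A ** transpose A)"
proof -
  have surj: "surj ((*v) A)" using assms full_rank_surjective by blast
  have "y = 0" if "(A ** transpose A) *v y = 0" for y
  proof -
    have "inner (transpose A *v y) (transpose A *v y) = inner y ((A ** transpose A) *v y)"
      by (metis dot_lmul_matrix matrix_vector_mul_assoc transpose_matrix_vector)
    then have ATy: "transpose A *v y = 0" using that by simp
    obtain z where "y = A *v z" using surj by (metis surjD)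
    then have "inner y y = inner (transpose A *v y) z"
      by (metis dot_lmul_matrix transpose_matrix_vector)
    then show ?thesis using ATy by simp
  qed
  then show ?thesis
    unfolding invertible_left_inverse matrix_left_invertible_ker by blast
qed

lemma inverse_of_symmetric_is_symmetric:
  fixes G C :: "real^'n^'n"
  assumes "transpose G = G" "G ** C = mat 1" "C ** G = mat 1"
  shows "transpose C = C"
proof -
  have "transpose C = transpose C ** (G ** C)"
    using assms(2) by simp
  also have "\<dots> = (transpose C ** G) ** C"
    by (simp add: matrix_mul_assoc)
  also have "transpose C ** G = mat 1"
    using assms(1,2) by (metis matrix_transpose_mul transpose_mat)
  finally show ?thesis by simp
qed

lemma pinv_full_row_rank_right_inverse:
  fixes A :: "real^'n^'m"
  assumes "rank A = CARD('m)"
  shows "A ** pinv A = mat 1"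
proof -
  obtain C where C: "(A ** transpose A) ** C = mat 1" "C ** (A ** transpose A) = mat 1"
    using invertible_gram_full_row_rank[OF assms] invertible_def by blast
  have C_sym: "transpose C = C"
    by (rule inverse_of_symmetric_is_symmetric[OF _ C]) (simp add: matrix_transpose_mul)
  define X where "X = transpose A ** C"
  have AX: "A ** X = mat 1" using C(1) by (simp add: X_def matrix_mul_assoc)
  have "is_pinv A X" unfolding is_pinv_def
  proof (intro conjI)
    show "A ** X ** A = A" using AX by simp
    show "X ** A ** X = X" using AX by (simp add: matrix_mul_assoc[symmetric])
    show "transpose (A ** X) = A ** X" using AX by simp
    show "transpose (X ** A) = X ** A" using C_sym
      by (simp add: X_def matrix_transpose_mul matrix_mul_assoc)
  qed
  then have "pinv A = X" by (rule pinv_eqI)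
  with AX show ?thesis by simp
qed

theorem corollary3p1:
  fixes A B :: "real^'n^'m" and b :: "real^'m" and p :: ereal
  assumes "CARD('m) < CARD('n)"
    and "1 \<le> p"
    and "rank A = CARD('m)"
    and "opnorm p (pinv A ** B) < 1"
  shows "(\<exists>!x :: real^'n. x = pinv A *v (B *v vabs x + b)) \<and>
         (\<forall>x :: real^'n. x = pinv A *v (B *v vabs x + b) \<longrightarrow> A *v x - B *v vabs x = b)"
proof (intro conjI allI impI)
  have "pinv A *v (B *v vabs x + b) = (pinv A ** B) *v vabs x + pinv A *v b" for x
    by (simp add: matrix_vector_mul_assoc matrix_vector_right_distrib)
  then show "\<exists>!x. x = pinv A *v (B *v vabs x + b)"
    using ex1_fixpoint_matrix_vabs_affine[OF assms(2,4)] by simp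
next
  fix x assume "x = pinv A *v (B *v vabs x + b)"
  then have "A *v x = (A ** pinv A) *v (B *v vabs x + b)"
    by (metis matrix_vector_mul_assoc)
  then show "A *v x - B *v vabs x = b"
    by (simp add: pinv_full_row_rank_right_inverse[OF assms(3)])
qed

end
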